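(* Let $\mathcal A=(d_0,\dots,d_k,\psi)$ be a neural network architecture with a $C^1$ activation function $\psi\colon\mathbb R\to\mathbb R$ whose derivative is locally Lipschitz. Let $\ell\colon\mathbb R^{d_k}\times\mathbb R^{d_k}\to[0,\infty)$ be a $C^1$ loss function with locally Lipschitz gradient, and let $f\colon\mathbb R^{d_0}\to\mathbb R^{d_k}$ be a $C^1$ function with locally Lipschitz differential. Let $\mu$ be a probability measure on $\mathbb R^{d_0}$ such that either $\mu=\frac1n\sum_{i=1}^n\delta_{x_i}$ for some $n\in\mathbb N$ and $x_1,\dots,x_n\in\mathbb R^{d_0}$, or $d\mu(x)=p(x)\,dx$ for a $C^1$ definable function $p\colon\mathbb R^{d_0}\to[0,\infty)$ of compact support. Then $\mathcal L\colon\mathbb R^{d(\mathcal A)}\to\mathbb R$, $\mathcal L(\theta)=\mathbb E_{x\sim\mu}[\ell(\mathcal N^{\mathcal A}_\theta(x),f(x))]$, has locally Lipschitz gradient.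
   Context: A $C^1$ map $g\colon\mathbb R^n\to\mathbb R^m$ has locally Lipschitz differential (gradient, derivative) if every point has an open neighbourhood $U$ and $L>0$ with $\|Dg(x_1)-Dg(x_2)\|\le L\|x_1-x_2\|$ for $x_1,x_2\in U$. A loss function is $\ell\colon\mathbb R^n\times\mathbb R^n\to[0,\infty)$ with $\ell(x,y)=0\iff x=y$. Definable means definable in some o-minimal structure (a collection $\mathcal S_n\subseteq\mathcal P(\mathbb R^n)$ closed under finite Boolean operations, products and coordinate projections, containing all sets $\{p>0\}$, $\{p=0\}$ for real polynomials $p$, with every set in $\mathcal S_1$ a finite union of points and intervals; a function is definable if its graph is). A neural network architecture is $\mathcal A=(d_0,\dots,d_k,\psi)$ with positive integers $d_i$ and $\psi\colon\mathbb R\to\mathbb R$; $d(\mathcal A)=\sum_{i=1}^kd_i(d_{i-1}+1)$; $\theta\in\mathbb R^{d(\mathcal A)}$ is identified with $(W_1,b_1,\dots,W_k,b_k)$, $W_i\in\mathbb R^{d_i\times d_{i-1}},b_i\in\mathbb R^{d_i}$; $\mathcal N^{\mathcal A}_\theta=f_k\circ\dots\circ f_1$ with $f_i(x)=\psi^{(d_i)}(W_ix+b_i)$ for $i<k$ ($\psi$ componentwise), $f_k(x)=W_kx+b_k$. $\delta_x$ is the Dirac measure at $x$. *)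

theory Defs
  imports "HOL-Probability.Probability"
begin

definition C1_map :: "('a::real_normed_vector \<Rightarrow> 'b::real_normed_vector) \<Rightarrow> bool" where
  "C1_map g \<longleftrightarrow> (\<exists>D::'a \<Rightarrow> ('a \<Rightarrow>\<^sub>L 'b).
     (\<forall>x. (g has_derivative blinfun_apply (D x)) (at x)) \<and> continuous_on UNIV D)"

definition C1_loclip :: "('a::real_normed_vector \<Rightarrow> 'b::real_normed_vector) \<Rightarrow> bool" where
  "C1_loclip g \<longleftrightarrow> (\<exists>D::'a \<Rightarrow> ('a \<Rightarrow>\<^sub>L 'b).
     (\<forall>x. (g has_derivative blinfun_apply (D x)) (at x)) \<and> continuous_on UNIV D \<and>
     (\<forall>x. \<exists>U L. open U \<and> x \<in> U \<and> L > 0 \<and>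
        (\<forall>x1\<in>U. \<forall>x2\<in>U. norm (D x1 - D x2) \<le> L * dist x1 x2)))"

definition loss_fun :: "('a \<Rightarrow> 'a \<Rightarrow> real) \<Rightarrow> bool" where
  "loss_fun l \<longleftrightarrow> (\<forall>x y. l x y \<ge> 0 \<and> (l x y = 0 \<longleftrightarrow> x = y))"

definition enum_idx :: "nat \<Rightarrow> 'n::finite" where
  "enum_idx = (SOME f. bij_betw f {..<CARD('n)} (UNIV::'n set))"

definition vec_to_fun :: "real ^ 'n \<Rightarrow> (nat \<Rightarrow> real)" where
  "vec_to_fun x = (\<lambda>i. if i < CARD('n) then x $ (enum_idx i :: 'n) else 0)"

definition fun_to_vec :: "(nat \<Rightarrow> real) \<Rightarrow> real ^ 'n" where
  "fun_to_vec v = (\<chi> j. v (inv_into {..<CARD('n)} (enum_idx :: nat \<Rightarrow> 'n) j))"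

definition vec_list :: "real ^ 'n \<Rightarrow> real list" where
  "vec_list x = map (\<lambda>i. x $ (enum_idx i :: 'n)) [0..<CARD('n)]"

text \<open>Architecture ds = [d_0, ..., d_k]; k = length ds - 1.
  Parameter vector theta (entries 0 ..< nn_dim ds) = (W_1, b_1, ..., W_k, b_k),
  each W_i stored row-major, followed by b_i.\<close>

definition nn_dim :: "nat list \<Rightarrow> nat" where
  "nn_dim ds = (\<Sum>i\<in>{1..length ds - 1}. ds!i * (ds!(i-1) + 1))"

definition layer_off :: "nat list \<Rightarrow> nat \<Rightarrow> nat" where
  "layer_off ds i = (\<Sum>j\<in>{1..<i}. ds!j * (ds!(j-1) + 1))"

definition nn_W :: "nat list \<Rightarrow> (nat \<Rightarrow> real) \<Rightarrow> nat \<Rightarrow> nat \<Rightarrow> nat \<Rightarrow> real" where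
  "nn_W ds \<theta> i r c = \<theta> (layer_off ds i + r * ds!(i-1) + c)"

definition nn_b :: "nat list \<Rightarrow> (nat \<Rightarrow> real) \<Rightarrow> nat \<Rightarrow> nat \<Rightarrow> real" where
  "nn_b ds \<theta> i r = \<theta> (layer_off ds i + ds!i * ds!(i-1) + r)"

definition nn_affine :: "nat list \<Rightarrow> (nat \<Rightarrow> real) \<Rightarrow> nat \<Rightarrow> (nat \<Rightarrow> real) \<Rightarrow> (nat \<Rightarrow> real)" where
  "nn_affine ds \<theta> i x = (\<lambda>r. if r < ds!i
      then (\<Sum>c<ds!(i-1). nn_W ds \<theta> i r c * x c) + nn_b ds \<theta> i r else 0)"

fun nn_layers :: "nat list \<Rightarrow> (real \<Rightarrow> real) \<Rightarrow> (nat \<Rightarrow> real) \<Rightarrow> nat \<Rightarrow> (nat \<Rightarrow> real) \<Rightarrow> (nat \<Rightarrow> real)" where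
  "nn_layers ds \<psi> \<theta> 0 x = x"
| "nn_layers ds \<psi> \<theta> (Suc i) x =
     (let y = nn_affine ds \<theta> (Suc i) (nn_layers ds \<psi> \<theta> i x) in
      if Suc i < length ds - 1 then (\<lambda>r. if r < ds!(Suc i) then \<psi> (y r) else 0) else y)"

definition nn_eval :: "nat list \<Rightarrow> (real \<Rightarrow> real) \<Rightarrow> (nat \<Rightarrow> real) \<Rightarrow> (nat \<Rightarrow> real) \<Rightarrow> (nat \<Rightarrow> real)" where
  "nn_eval ds \<psi> \<theta> x = nn_layers ds \<psi> \<theta> (length ds - 1) x"

definition nn_fun :: "nat list \<Rightarrow> (real \<Rightarrow> real) \<Rightarrow> real ^ 'p \<Rightarrow> real ^ 'i \<Rightarrow> real ^ 'o" where
  "nn_fun ds \<psi> \<theta> x = fun_to_vec (nn_eval ds \<psi> (vec_to_fun \<theta>) (vec_to_fun x))"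

text \<open>Polynomial functions R^n -> R (points of R^n are real lists of length n).\<close>
inductive_set poly_funs :: "nat \<Rightarrow> (real list \<Rightarrow> real) set" for n where
  const: "(\<lambda>_. c) \<in> poly_funs n"
| var: "i < n \<Longrightarrow> (\<lambda>xs. xs ! i) \<in> poly_funs n"
| add: "p \<in> poly_funs n \<Longrightarrow> q \<in> poly_funs n \<Longrightarrow> (\<lambda>xs. p xs + q xs) \<in> poly_funs n"
| mult: "p \<in> poly_funs n \<Longrightarrow> q \<in> poly_funs n \<Longrightarrow> (\<lambda>xs. p xs * q xs) \<in> poly_funs n"

definition Rn :: "nat \<Rightarrow> real list set" where
  "Rn n = {xs. length xs = n}"

definition o_minimal :: "(nat \<Rightarrow> real list set set) \<Rightarrow> bool" where
  "o_minimal S \<longleftrightarrow>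
    (\<forall>n. \<forall>A\<in>S n. A \<subseteq> Rn n) \<and>
    (\<forall>n. Rn n \<in> S n) \<and>
    (\<forall>n. \<forall>A\<in>S n. \<forall>B\<in>S n. A \<union> B \<in> S n) \<and>
    (\<forall>n. \<forall>A\<in>S n. Rn n - A \<in> S n) \<and>
    (\<forall>n m. \<forall>A\<in>S n. \<forall>B\<in>S m. {xs @ ys | xs ys. xs \<in> A \<and> ys \<in> B} \<in> S (n + m)) \<and>
    (\<forall>n js. \<forall>A\<in>S n. sorted_wrt (<) js \<and> (\<forall>j\<in>set js. j < n) \<longrightarrow>
        (\<lambda>xs. map (\<lambda>j. xs ! j) js) ` A \<in> S (length js)) \<and>
    (\<forall>n. \<forall>p\<in>poly_funs n. {xs\<in>Rn n. p xs > 0} \<in> S n \<and> {xs\<in>Rn n. p xs = 0} \<in> S n) \<and>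
    (\<forall>A\<in>S 1. \<exists>F. finite F \<and> (\<forall>I\<in>F. is_interval (I::real set)) \<and>
        (\<lambda>xs. xs ! 0) ` A = \<Union>F)"

definition definable_fun :: "(real ^ 'n \<Rightarrow> real) \<Rightarrow> bool" where
  "definable_fun p \<longleftrightarrow> (\<exists>S. o_minimal S \<and> {vec_list x @ [p x] | x. True} \<in> S (CARD('n) + 1))"

end

theory Submission
  imports Defs
begin

(*
  The integrand G(\<theta>, x) = l (N\<^sub>\<theta> x) (f x) is C^1 with locally Lipschitz derivative jointly in
  (\<theta>, x): this class contains the linear maps and is closed under sums, products, pairing and
  composition (chain rule, plus the fact that a bilinear image of locally Lipschitz maps is
  locally Lipschitz), and the network is assembled from the weights, the inputs and \<psi> by
  exactly these operations.

  For an empirical measure the loss is a finite weighted sum of the maps \<theta> \<mapsto> G(\<theta>, x\<^sub>i).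
  For a continuous density p supported in a box C it equals \<integral>\<^sub>C p(x) G(\<theta>, x) dx; differentiating
  under the integral sign gives \<integral>\<^sub>C p(x) \<partial>\<^sub>\<theta>G(\<theta>, x) dx, which is locally Lipschitz in \<theta>
  because \<partial>\<^sub>\<theta>G is Lipschitz in \<theta> uniformly for x in the compact set C.
*)

section \<open>Locally Lipschitz maps\<close>

definition locally_lipschitz :: "('a::metric_space \<Rightarrow> 'b::metric_space) \<Rightarrow> bool" where
  "locally_lipschitz g \<longleftrightarrow> (\<forall>x. \<exists>e>0. \<exists>L. L-lipschitz_on (ball x e) g)"

lemma locally_lipschitzE:
  assumes "locally_lipschitz g"
  obtains e L where "e > 0" "L-lipschitz_on (ball x e) g"
  using assms unfolding locally_lipschitz_def by blast

lemma locally_lipschitz_imp_continuous: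
  assumes "locally_lipschitz g"
  shows "continuous_on UNIV g"
proof (rule continuous_at_imp_continuous_on, intro ballI)
  fix x :: 'a
  obtain e L where "e > 0" "L-lipschitz_on (ball x e) g"
    using assms by (rule locally_lipschitzE)
  then have "continuous (at x within ball x e) g"
    by (intro lipschitz_on_continuous_within) auto
  with \<open>e > 0\<close> show "continuous (at x) g"
    using continuous_within_open[of x "ball x e" g] by simp
qed

lemma locally_lipschitz_const: "locally_lipschitz (\<lambda>x. c)"
  unfolding locally_lipschitz_def using lipschitz_on_constant zero_less_one by blast

lemma locally_lipschitz_add:
  fixes g h :: "'a::metric_space \<Rightarrow> 'b::real_normed_vector"
  assumes "locally_lipschitz g" "locally_lipschitz h"
  shows "locally_lipschitz (\<lambda>x. g x + h x)"
  unfolding locally_lipschitz_def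
proof
  fix x
  obtain e1 L1 where e1: "e1 > 0" "L1-lipschitz_on (ball x e1) g"
    using assms(1) by (rule locally_lipschitzE)
  obtain e2 L2 where e2: "e2 > 0" "L2-lipschitz_on (ball x e2) h"
    using assms(2) by (rule locally_lipschitzE)
  have "(L1 + L2)-lipschitz_on (ball x (min e1 e2)) (\<lambda>x. g x + h x)"
    by (intro lipschitz_on_add lipschitz_on_subset[OF e1(2)] lipschitz_on_subset[OF e2(2)]) auto
  with e1(1) e2(1) show "\<exists>e>0. \<exists>L. L-lipschitz_on (ball x e) (\<lambda>x. g x + h x)"
    by (intro exI[of _ "min e1 e2"]) auto
qed

lemma locally_lipschitz_compose:
  assumes "locally_lipschitz g" "locally_lipschitz h"
  shows "locally_lipschitz (\<lambda>x. g (h x))"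
  unfolding locally_lipschitz_def
proof
  fix x
  obtain e1 L1 where e1: "e1 > 0" "L1-lipschitz_on (ball (h x) e1) g"
    using assms(1) by (rule locally_lipschitzE)
  obtain e2 L2 where e2: "e2 > 0" "L2-lipschitz_on (ball x e2) h"
    using assms(2) by (rule locally_lipschitzE)
  have "continuous (at x) h"
    using locally_lipschitz_imp_continuous[OF assms(2)] by (simp add: continuous_on_eq_continuous_at)
  then obtain d where d: "d > 0" "\<And>y. dist y x < d \<Longrightarrow> dist (h y) (h x) < e1"
    using e1(1) unfolding continuous_at_eps_delta by blast
  have "h ` ball x (min d e2) \<subseteq> ball (h x) e1"
    using d by (auto simp: dist_commute)
  then have "(L1 * L2)-lipschitz_on (ball x (min d e2)) (\<lambda>x. g (h x))"
    by (intro lipschitz_on_compose2 lipschitz_on_subset[OF e2(2)] lipschitz_on_subset[OF e1(2)]) auto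
  with d(1) e2(1) show "\<exists>e>0. \<exists>L. L-lipschitz_on (ball x e) (\<lambda>x. g (h x))"
    by (intro exI[of _ "min d e2"]) auto
qed

lemma lipschitz_on_ball_norm_bound:
  fixes g :: "'a::metric_space \<Rightarrow> 'b::real_normed_vector"
  assumes "L-lipschitz_on (ball x e) g" "y \<in> ball x e"
  shows "norm (g y) \<le> norm (g x) + L * e"
proof -
  have "L \<ge> 0" using assms(1) by (rule lipschitz_on_nonneg)
  have "x \<in> ball x e" using assms(2) by (auto intro: le_less_trans[OF zero_le_dist])
  have "norm (g y) - norm (g x) \<le> L * dist y x"
    using lipschitz_onD[OF assms(1) assms(2) \<open>x \<in> ball x e\<close>] norm_triangle_ineq2[of "g y" "g x"]
    by (simp add: dist_norm)
  also have "\<dots> \<le> L * e"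
    using assms(2) \<open>L \<ge> 0\<close> by (intro mult_left_mono) (auto simp: dist_commute)
  finally show ?thesis by simp
qed

lemma locally_lipschitz_bilinear:
  assumes bil: "bounded_bilinear pr" and "locally_lipschitz g" "locally_lipschitz h"
  shows "locally_lipschitz (\<lambda>x. pr (g x) (h x))"
  unfolding locally_lipschitz_def
proof
  fix x
  obtain e1 L1 where e1: "e1 > 0" "L1-lipschitz_on (ball x e1) g"
    using assms(2) by (rule locally_lipschitzE)
  obtain e2 L2 where e2: "e2 > 0" "L2-lipschitz_on (ball x e2) h"
    using assms(3) by (rule locally_lipschitzE)
  obtain K where K: "K \<ge> 0" "\<And>a b. norm (pr a b) \<le> norm a * norm b * K"
    using bounded_bilinear.nonneg_bounded[OF bil] by blast
  define e where "e = min e1 e2"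
  define Bg where "Bg = norm (g x) + L1 * e1"
  define Bh where "Bh = norm (h x) + L2 * e2"
  have L: "L1 \<ge> 0" "L2 \<ge> 0"
    using e1 e2 lipschitz_on_nonneg by blast+
  have B: "Bg \<ge> 0" "Bh \<ge> 0"
    using L e1 e2 by (simp_all add: Bg_def Bh_def)
  have bound_g: "norm (g y) \<le> Bg" and bound_h: "norm (h y) \<le> Bh" if "y \<in> ball x e" for y
    using lipschitz_on_ball_norm_bound[OF e1(2)] lipschitz_on_ball_norm_bound[OF e2(2)] that
    by (auto simp: Bg_def Bh_def e_def)
  have "(K * (L1 * Bh + Bg * L2))-lipschitz_on (ball x e) (\<lambda>x. pr (g x) (h x))"
  proof (rule lipschitz_onI)
    fix y z assume y: "y \<in> ball x e" and z: "z \<in> ball x e"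
    have dg: "norm (g y - g z) \<le> L1 * dist y z"
      using lipschitz_onD[OF e1(2)] y z by (auto simp: e_def dist_norm)
    have dh: "norm (h y - h z) \<le> L2 * dist y z"
      using lipschitz_onD[OF e2(2)] y z by (auto simp: e_def dist_norm)
    have "pr (g y) (h y) - pr (g z) (h z) = pr (g y - g z) (h y) + pr (g z) (h y - h z)"
      by (simp add: bounded_bilinear.diff_left[OF bil] bounded_bilinear.diff_right[OF bil])
    then have "norm (pr (g y) (h y) - pr (g z) (h z))
        \<le> norm (pr (g y - g z) (h y)) + norm (pr (g z) (h y - h z))"
      by (simp add: norm_triangle_ineq)
    also have "\<dots> \<le> norm (g y - g z) * norm (h y) * K + norm (g z) * norm (h y - h z) * K"
      using K by (intro add_mono) auto
    also have "\<dots> \<le> (L1 * dist y z) * Bh * K + Bg * (L2 * dist y z) * K"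
      using K dg dh bound_g[OF z] bound_h[OF y] L B
      by (intro add_mono mult_right_mono mult_mono) auto
    also have "\<dots> = K * (L1 * Bh + Bg * L2) * dist y z"
      by (simp add: algebra_simps)
    finally show "dist (pr (g y) (h y)) (pr (g z) (h z)) \<le> K * (L1 * Bh + Bg * L2) * dist y z"
      by (simp add: dist_norm)
  qed (use K L B in simp)
  with e1(1) e2(1) show "\<exists>e>0. \<exists>L. L-lipschitz_on (ball x e) (\<lambda>x. pr (g x) (h x))"
    by (intro exI[of _ e]) (auto simp: e_def)
qed

lemma locally_lipschitz_iff:
  fixes g :: "'a::metric_space \<Rightarrow> 'b::real_normed_vector"
  shows "locally_lipschitz g \<longleftrightarrow> (\<forall>x. \<exists>U L. open U \<and> x \<in> U \<and> L > 0 \<and>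
            (\<forall>x1\<in>U. \<forall>x2\<in>U. norm (g x1 - g x2) \<le> L * dist x1 x2))"
proof
  assume lip: "locally_lipschitz g"
  show "\<forall>x. \<exists>U L. open U \<and> x \<in> U \<and> L > 0 \<and> (\<forall>x1\<in>U. \<forall>x2\<in>U. norm (g x1 - g x2) \<le> L * dist x1 x2)"
  proof
    fix x
    obtain e L where e: "e > 0" "L-lipschitz_on (ball x e) g"
      using lip by (rule locally_lipschitzE)
    have "L \<ge> 0" using e(2) by (rule lipschitz_on_nonneg)
    have "(L + 1)-lipschitz_on (ball x e) g"
      using lipschitz_on_mono[OF e(2) order_refl, of "L + 1"] by simp
    then have "\<forall>x1\<in>ball x e. \<forall>x2\<in>ball x e. norm (g x1 - g x2) \<le> (L + 1) * dist x1 x2"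
      unfolding dist_norm[symmetric] by (blast dest: lipschitz_onD)
    with e(1) \<open>L \<ge> 0\<close> show "\<exists>U L. open U \<and> x \<in> U \<and> L > 0 \<and> (\<forall>x1\<in>U. \<forall>x2\<in>U. norm (g x1 - g x2) \<le> L * dist x1 x2)"
      by (intro exI[of _ "ball x e"] exI[of _ "L + 1"] conjI) auto
  qed
next
  assume H: "\<forall>x. \<exists>U L. open U \<and> x \<in> U \<and> L > 0 \<and> (\<forall>x1\<in>U. \<forall>x2\<in>U. norm (g x1 - g x2) \<le> L * dist x1 x2)"
  show "locally_lipschitz g"
    unfolding locally_lipschitz_def
  proof
    fix x
    obtain U L where U: "open U" "x \<in> U" "L > 0" "\<forall>x1\<in>U. \<forall>x2\<in>U. norm (g x1 - g x2) \<le> L * dist x1 x2"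
      using H by blast
    obtain e where e: "e > 0" "ball x e \<subseteq> U"
      using U openE by blast
    have "L-lipschitz_on (ball x e) g"
    proof (rule lipschitz_onI)
      fix x1 x2 assume "x1 \<in> ball x e" "x2 \<in> ball x e"
      with U(4) e(2) show "dist (g x1) (g x2) \<le> L * dist x1 x2"
        unfolding dist_norm[of "g x1"] by blast
    qed (use U(3) in simp)
    with e(1) show "\<exists>e>0. \<exists>L. L-lipschitz_on (ball x e) g" by blast
  qed
qed

section \<open>C^1 maps with locally Lipschitz derivative\<close>

lemma C1_loclip_iff:
  "C1_loclip g \<longleftrightarrow> (\<exists>D. (\<forall>x. (g has_derivative blinfun_apply (D x)) (at x)) \<and> locally_lipschitz D)"
  unfolding C1_loclip_def locally_lipschitz_iff[symmetric]
  by (blast intro: locally_lipschitz_imp_continuous)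

lemma C1_loclipI:
  "(\<And>x. (g has_derivative blinfun_apply (D x)) (at x)) \<Longrightarrow> locally_lipschitz D \<Longrightarrow> C1_loclip g"
  unfolding C1_loclip_iff by blast

lemma C1_loclipE:
  assumes "C1_loclip g"
  obtains D where "\<And>x. (g has_derivative blinfun_apply (D x)) (at x)" "locally_lipschitz D"
  using assms unfolding C1_loclip_iff by blast

lemma C1_map_imp_continuous:
  assumes "C1_map g"
  shows "continuous_on UNIV g"
proof -
  obtain D where "\<And>x. (g has_derivative blinfun_apply (D x)) (at x)"
    using assms unfolding C1_map_def by blast
  then show ?thesis
    by (intro continuous_at_imp_continuous_on ballI has_derivative_continuous)
qed

lemma C1_loclip_imp_continuous:
  assumes "C1_loclip g"
  shows "continuous_on UNIV g"
proof -
  obtain D where "\<And>x. (g has_derivative blinfun_apply (D x)) (at x)"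
    using assms C1_loclipE by blast
  then show ?thesis
    by (intro continuous_at_imp_continuous_on ballI has_derivative_continuous)
qed

lemma C1_loclip_imp_locally_lipschitz:
  fixes g :: "'a::real_normed_vector \<Rightarrow> 'b::real_normed_vector"
  assumes "C1_loclip g"
  shows "locally_lipschitz g"
  unfolding locally_lipschitz_def
proof
  fix x
  obtain D where D: "\<And>x. (g has_derivative blinfun_apply (D x)) (at x)" "locally_lipschitz D"
    using assms C1_loclipE by blast
  obtain e L where e: "e > 0" "L-lipschitz_on (ball x e) D"
    using D(2) by (rule locally_lipschitzE)
  have "L \<ge> 0" using e(2) by (rule lipschitz_on_nonneg)
  have "(norm (D x) + L * e)-lipschitz_on (ball x e) g"
  proof (rule bounded_derivative_imp_lipschitz)
    fix y assume "y \<in> ball x e"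
    show "(g has_derivative blinfun_apply (D y)) (at y within ball x e)"
      using D(1) by (rule has_derivative_at_withinI)
    show "onorm (blinfun_apply (D y)) \<le> norm (D x) + L * e"
      using lipschitz_on_ball_norm_bound[OF e(2) \<open>y \<in> ball x e\<close>]
      by (simp add: norm_blinfun.rep_eq)
  qed (use e(1) \<open>L \<ge> 0\<close> in simp_all)
  with e(1) show "\<exists>e>0. \<exists>L. L-lipschitz_on (ball x e) g" by blast
qed

lemma C1_loclip_const: "C1_loclip (\<lambda>x. c)"
  by (rule C1_loclipI[where D = "\<lambda>_. 0"]) (simp_all add: zero_blinfun.rep_eq locally_lipschitz_const)

lemma C1_loclip_linear:
  assumes "bounded_linear f"
  shows "C1_loclip f"
proof (rule C1_loclipI[where D = "\<lambda>_. Blinfun f"])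
  show "(f has_derivative blinfun_apply (Blinfun f)) (at x)" for x
    unfolding bounded_linear_Blinfun_apply[OF assms]
    by (rule bounded_linear_imp_has_derivative[OF assms])
qed (rule locally_lipschitz_const)

lemma C1_loclip_add:
  assumes "C1_loclip g" "C1_loclip h"
  shows "C1_loclip (\<lambda>x. g x + h x)"
proof -
  obtain Dg where g: "\<And>x. (g has_derivative blinfun_apply (Dg x)) (at x)" "locally_lipschitz Dg"
    using assms(1) C1_loclipE by blast
  obtain Dh where h: "\<And>x. (h has_derivative blinfun_apply (Dh x)) (at x)" "locally_lipschitz Dh"
    using assms(2) C1_loclipE by blast
  show ?thesis
  proof (rule C1_loclipI[where D = "\<lambda>x. Dg x + Dh x"])
    fix x
    have "blinfun_apply (Dg x + Dh x) = (\<lambda>v. Dg x v + Dh x v)"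
      by (simp add: fun_eq_iff blinfun.add_left)
    with has_derivative_add[OF g(1) h(1)]
    show "((\<lambda>x. g x + h x) has_derivative blinfun_apply (Dg x + Dh x)) (at x)"
      by simp
  qed (rule locally_lipschitz_add[OF g(2) h(2)])
qed

lemma C1_loclip_compose:
  assumes "C1_loclip g" "C1_loclip h"
  shows "C1_loclip (\<lambda>x. g (h x))"
proof -
  obtain Dg where g: "\<And>x. (g has_derivative blinfun_apply (Dg x)) (at x)" "locally_lipschitz Dg"
    using assms(1) C1_loclipE by blast
  obtain Dh where h: "\<And>x. (h has_derivative blinfun_apply (Dh x)) (at x)" "locally_lipschitz Dh"
    using assms(2) C1_loclipE by blast
  show ?thesis
  proof (rule C1_loclipI[where D = "\<lambda>x. Dg (h x) o\<^sub>L Dh x"])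
    show "((\<lambda>x. g (h x)) has_derivative blinfun_apply (Dg (h x) o\<^sub>L Dh x)) (at x)" for x
      using has_derivative_compose[OF h(1) g(1)] by (simp add: blinfun_compose.rep_eq comp_def)
    show "locally_lipschitz (\<lambda>x. Dg (h x) o\<^sub>L Dh x)"
      using C1_loclip_imp_locally_lipschitz[OF assms(2)]
      by (intro locally_lipschitz_bilinear[OF bounded_bilinear_blinfun_compose]
          locally_lipschitz_compose[OF g(2)] h(2))
  qed
qed

lemma C1_loclip_mult:
  fixes g h :: "'a::real_normed_vector \<Rightarrow> real"
  assumes "C1_loclip g" "C1_loclip h"
  shows "C1_loclip (\<lambda>x. g x * h x)"
proof -
  obtain Dg where g: "\<And>x. (g has_derivative blinfun_apply (Dg x)) (at x)" "locally_lipschitz Dg"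
    using assms(1) C1_loclipE by blast
  obtain Dh where h: "\<And>x. (h has_derivative blinfun_apply (Dh x)) (at x)" "locally_lipschitz Dh"
    using assms(2) C1_loclipE by blast
  show ?thesis
  proof (rule C1_loclipI[where D = "\<lambda>x. g x *\<^sub>R Dh x + h x *\<^sub>R Dg x"])
    fix x
    have "blinfun_apply (g x *\<^sub>R Dh x + h x *\<^sub>R Dg x) = (\<lambda>v. g x * Dh x v + Dg x v * h x)"
      by (simp add: fun_eq_iff blinfun.add_left blinfun.scaleR_left)
    with has_derivative_mult[OF g(1) h(1)]
    show "((\<lambda>x. g x * h x) has_derivative blinfun_apply (g x *\<^sub>R Dh x + h x *\<^sub>R Dg x)) (at x)"
      by simp
    show "locally_lipschitz (\<lambda>x. g x *\<^sub>R Dh x + h x *\<^sub>R Dg x)"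
      using C1_loclip_imp_locally_lipschitz[OF assms(1)] C1_loclip_imp_locally_lipschitz[OF assms(2)]
      by (intro locally_lipschitz_add locally_lipschitz_bilinear[OF bounded_bilinear_scaleR] g(2) h(2))
  qed
qed

lemma C1_loclip_sum:
  assumes "finite I" "\<And>i. i \<in> I \<Longrightarrow> C1_loclip (g i)"
  shows "C1_loclip (\<lambda>x. \<Sum>i\<in>I. g i x)"
  using assms by (induction I rule: finite_induct) (auto intro: C1_loclip_const C1_loclip_add)

lemma C1_loclip_vec_nth:
  assumes "C1_loclip g"
  shows "C1_loclip (\<lambda>x. g x $ j)"
  using C1_loclip_compose[OF C1_loclip_linear[OF bounded_linear_vec_nth] assms] .

lemma C1_loclip_componentwise:
  fixes g :: "'a::real_normed_vector \<Rightarrow> real ^ 'n"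
  assumes "\<And>j. C1_loclip (\<lambda>x. g x $ j)"
  shows "C1_loclip g"
proof -
  have expansion: "g = (\<lambda>x. \<Sum>j\<in>UNIV. (g x $ j) *\<^sub>R axis j 1)"
    by (rule ext) (simp only: scalar_mult_eq_scaleR[symmetric] basis_expansion)
  show ?thesis
    using C1_loclip_compose[OF C1_loclip_linear[OF bounded_linear_scaleR_left] assms]
    by (subst expansion) (intro C1_loclip_sum; simp)
qed

lemma C1_loclip_Pair:
  assumes "C1_loclip g" "C1_loclip h"
  shows "C1_loclip (\<lambda>x. (g x, h x))"
proof -
  have "bounded_linear (\<lambda>a. (a, 0))" "bounded_linear (\<lambda>b. (0, b))"
    by (auto intro: bounded_linear_Pair)
  then have "C1_loclip (\<lambda>x. (g x, 0))" "C1_loclip (\<lambda>x. (0, h x))"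
    using C1_loclip_compose[OF C1_loclip_linear assms(1)] C1_loclip_compose[OF C1_loclip_linear assms(2)]
    by blast+
  from C1_loclip_add[OF this] show ?thesis by simp
qed

section \<open>Smoothness of the network in weights and inputs\<close>

lemma C1_loclip_vec_to_fun:
  fixes g :: "'a::real_normed_vector \<Rightarrow> real ^ 'n"
  assumes "C1_loclip g"
  shows "C1_loclip (\<lambda>x. vec_to_fun (g x) k)"
  using C1_loclip_vec_nth[OF assms] by (cases "k < CARD('n)") (simp_all add: vec_to_fun_def C1_loclip_const)

lemma C1_loclip_nn_layers:
  assumes act: "C1_loclip \<psi>"
  shows "C1_loclip (\<lambda>z :: (real ^ 'p) \<times> (real ^ 'i).
           nn_layers ds \<psi> (vec_to_fun (fst z)) i (vec_to_fun (snd z)) r)"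
proof (induction i arbitrary: r)
  case 0
  show ?case
    by (simp add: C1_loclip_vec_to_fun C1_loclip_linear[OF bounded_linear_snd])
next
  case (Suc i)
  let ?layer = "\<lambda>z :: (real ^ 'p) \<times> (real ^ 'i). nn_layers ds \<psi> (vec_to_fun (fst z)) i (vec_to_fun (snd z))"
  have affine: "C1_loclip (\<lambda>z. nn_affine ds (vec_to_fun (fst z)) (Suc i) (?layer z) r)" for r
  proof (cases "r < ds ! Suc i")
    case True
    have "C1_loclip (\<lambda>z. (\<Sum>c<ds ! i. vec_to_fun (fst z) (layer_off ds (Suc i) + r * ds ! i + c) * ?layer z c)
        + vec_to_fun (fst z) (layer_off ds (Suc i) + ds ! Suc i * ds ! i + r))"
      by (intro C1_loclip_add C1_loclip_sum finite_lessThan C1_loclip_mult Suc.IH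
          C1_loclip_vec_to_fun C1_loclip_linear[OF bounded_linear_fst])
    with True show ?thesis
      by (simp add: nn_affine_def nn_W_def nn_b_def)
  qed (simp add: nn_affine_def C1_loclip_const)
  show ?case
    using affine C1_loclip_compose[OF act affine]
    by (cases "Suc i < length ds - 1"; cases "r < ds ! Suc i") (simp_all add: Let_def C1_loclip_const)
qed

lemma C1_loclip_nn_fun:
  assumes "C1_loclip \<psi>"
  shows "C1_loclip (\<lambda>z :: (real ^ 'p) \<times> (real ^ 'i). nn_fun ds \<psi> (fst z) (snd z) :: real ^ 'o)"
  by (rule C1_loclip_componentwise)
    (simp add: nn_fun_def fun_to_vec_def nn_eval_def C1_loclip_nn_layers[OF assms])

section \<open>Finitely supported measures\<close>

lemma empirical_measure_AE_sample:
  fixes xs :: "nat \<Rightarrow> 'a::t1_space"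
  assumes "sets M = sets borel"
    and "\<forall>A\<in>sets borel. emeasure M A = ennreal ((\<Sum>i<n. indicator A (xs i)) / real n)"
  shows "AE x in M. x \<in> xs ` {..<n}"
proof (rule AE_I')
  have "closed (xs ` {..<n})" by (simp add: finite_imp_closed)
  then have "UNIV - xs ` {..<n} \<in> sets borel" by (intro borel_open) auto
  moreover have "(\<Sum>i<n. indicator (UNIV - xs ` {..<n}) (xs i)) = (0::real)"
    by (intro sum.neutral) auto
  ultimately show "UNIV - xs ` {..<n} \<in> null_sets M"
    using assms by (simp add: null_sets_def)
qed (use sets_eq_imp_space_eq[OF assms(1)] in auto)

lemma integral_eq_sum_atoms:
  fixes F :: "'a::t1_space \<Rightarrow> real"
  assumes sets: "sets M = sets borel" and "finite_measure M"
    and "finite S" and AE: "AE x in M. x \<in> S"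
    and F: "F \<in> borel_measurable M"
  shows "integral\<^sup>L M F = (\<Sum>y\<in>S. measure M {y} * F y)"
proof -
  have atoms: "{y} \<in> sets M" "emeasure M {y} < \<infinity>" for y
    using sets finite_measure.emeasure_finite[OF \<open>finite_measure M\<close>] by (simp_all add: top.not_eq_extremum)
  have "integral\<^sup>L M F = integral\<^sup>L M (\<lambda>x. \<Sum>y\<in>S. F y * indicator {y} x)"
  proof (rule integral_cong_AE)
    show "(\<lambda>x. \<Sum>y\<in>S. F y * indicator {y} x) \<in> borel_measurable M"
      using atoms by measurable
    show "AE x in M. F x = (\<Sum>y\<in>S. F y * indicator {y} x)"
      using AE by eventually_elim (simp add: indicator_def \<open>finite S\<close> sum.delta)
  qed (rule F)
  also have "\<dots> = (\<Sum>y\<in>S. integral\<^sup>L M (\<lambda>x. F y * indicator {y} x))"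
    using atoms by (intro Bochner_Integration.integral_sum integrable_mult_right integrable_real_indicator)
  also have "\<dots> = (\<Sum>y\<in>S. measure M {y} * F y)"
    using atoms by (simp add: mult.commute)
  finally show ?thesis .
qed

lemma C1_loclip_fix_fst:
  assumes "C1_loclip G"
  shows "C1_loclip (\<lambda>x. G (\<theta>, x))"
  using C1_loclip_compose[OF assms C1_loclip_Pair[OF C1_loclip_const C1_loclip_linear[OF bounded_linear_ident]]] .

lemma C1_loclip_fix_snd:
  assumes "C1_loclip G"
  shows "C1_loclip (\<lambda>\<theta>. G (\<theta>, x))"
  using C1_loclip_compose[OF assms C1_loclip_Pair[OF C1_loclip_linear[OF bounded_linear_ident] C1_loclip_const]] .

lemma C1_loclip_integral_finite_support:
  fixes G :: "'a::real_normed_vector \<times> 'b::real_normed_vector \<Rightarrow> real"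
  assumes G: "C1_loclip G" and sets: "sets M = sets borel" and "finite_measure M"
    and "finite S" "AE x in M. x \<in> S"
  shows "C1_loclip (\<lambda>\<theta>. integral\<^sup>L M (\<lambda>x. G (\<theta>, x)))"
proof -
  have "(\<lambda>x. G (\<theta>, x)) \<in> borel_measurable M" for \<theta>
    using borel_measurable_continuous_onI[OF C1_loclip_imp_continuous[OF C1_loclip_fix_fst[OF G]]]
    by (simp add: measurable_cong_sets[OF sets refl])
  then have "integral\<^sup>L M (\<lambda>x. G (\<theta>, x)) = (\<Sum>y\<in>S. measure M {y} * G (\<theta>, y))" for \<theta>
    by (intro integral_eq_sum_atoms assms)
  moreover have "C1_loclip (\<lambda>\<theta>. \<Sum>y\<in>S. measure M {y} * G (\<theta>, y))"
    by (intro C1_loclip_sum C1_loclip_mult C1_loclip_const C1_loclip_fix_snd[OF G] \<open>finite S\<close>)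
  ultimately show ?thesis by simp
qed

section \<open>Differentiation under the integral sign\<close>

lemma locally_lipschitz_uniformly_on_compact:
  fixes D :: "'a::heine_borel \<times> 'b::metric_space \<Rightarrow> 'c::metric_space"
  assumes D: "locally_lipschitz D" and "compact K"
  obtains L where "L \<ge> 0" "\<And>x. x \<in> K \<Longrightarrow> L-lipschitz_on (cball \<theta>0 1) (\<lambda>\<theta>. D (\<theta>, x))"
proof -
  have "local_lipschitz K (cball \<theta>0 1) (\<lambda>x \<theta>. D (\<theta>, x))"
  proof (rule local_lipschitzI)
    fix x \<theta>
    obtain e L where e: "e > 0" "L-lipschitz_on (ball (\<theta>, x) e) D"
      using D by (rule locally_lipschitzE)
    have near: "(\<theta>', x') \<in> ball (\<theta>, x) e" if "dist \<theta> \<theta>' \<le> e / 3" "dist x x' \<le> e / 3" for \<theta>' x'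
    proof -
      have "dist (\<theta>, x) (\<theta>', x') \<le> dist \<theta> \<theta>' + dist x x'"
        unfolding dist_Pair_Pair by (rule sqrt_sum_squares_le_sum) auto
      with that e(1) show ?thesis by simp
    qed
    have "L-lipschitz_on (cball \<theta> (e / 3) \<inter> cball \<theta>0 1) (\<lambda>\<theta>. D (\<theta>, x'))"
      if "x' \<in> cball x (e / 3) \<inter> K" for x'
    proof (rule lipschitz_onI)
      fix \<theta>1 \<theta>2 assume "\<theta>1 \<in> cball \<theta> (e / 3) \<inter> cball \<theta>0 1" "\<theta>2 \<in> cball \<theta> (e / 3) \<inter> cball \<theta>0 1"
      with that have "(\<theta>1, x') \<in> ball (\<theta>, x) e" "(\<theta>2, x') \<in> ball (\<theta>, x) e"
        using near[of \<theta>1 x'] near[of \<theta>2 x'] by auto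
      from lipschitz_onD[OF e(2) this]
      show "dist (D (\<theta>1, x')) (D (\<theta>2, x')) \<le> L * dist \<theta>1 \<theta>2"
        by (simp add: dist_Pair_Pair)
    qed (use e(2) lipschitz_on_nonneg in blast)
    with e(1) show "\<exists>u>0. \<exists>L. \<forall>x'\<in>cball x u \<inter> K. L-lipschitz_on (cball \<theta> u \<inter> cball \<theta>0 1) (\<lambda>\<theta>. D (\<theta>, x'))"
      by (intro exI[of _ "e / 3"] conjI exI[of _ L]) auto
  qed
  moreover have "continuous_on K (\<lambda>x. D (\<theta>, x))" for \<theta>
    using locally_lipschitz_imp_continuous[OF D]
    by (rule continuous_on_compose2[of UNIV D]) (auto intro: continuous_intros)
  ultimately obtain L where "\<And>x. x \<in> K \<Longrightarrow> L-lipschitz_on (cball \<theta>0 1) (\<lambda>\<theta>. D (\<theta>, x))"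
    using local_lipschitz_compact_implies_lipschitz[OF _ compact_cball \<open>compact K\<close>] by blast
  then have "\<And>x. x \<in> K \<Longrightarrow> (max L 0)-lipschitz_on (cball \<theta>0 1) (\<lambda>\<theta>. D (\<theta>, x))"
    using lipschitz_on_mono[OF _ order_refl max.cobounded1] by blast
  with that show ?thesis by (meson max.cobounded2)
qed

lemma locally_lipschitz_weighted_integral:
  fixes D :: "'a::heine_borel \<times> 'b::euclidean_space \<Rightarrow> 'c::banach" and p :: "'b \<Rightarrow> real"
  assumes D: "locally_lipschitz D" and p: "continuous_on (cbox a b) p"
  shows "locally_lipschitz (\<lambda>\<theta>. integral (cbox a b) (\<lambda>x. p x *\<^sub>R D (\<theta>, x)))"
  unfolding locally_lipschitz_def
proof
  fix \<theta>0
  obtain L where L: "L \<ge> 0" "\<And>x. x \<in> cbox a b \<Longrightarrow> L-lipschitz_on (cball \<theta>0 1) (\<lambda>\<theta>. D (\<theta>, x))"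
    using locally_lipschitz_uniformly_on_compact[OF D compact_cbox] by blast
  obtain P where P: "P > 0" "\<And>x. x \<in> cbox a b \<Longrightarrow> \<bar>p x\<bar> \<le> P"
    using compact_imp_bounded[OF compact_continuous_image[OF p compact_cbox]]
    unfolding bounded_pos by auto
  have integrable: "(\<lambda>x. p x *\<^sub>R D (\<theta>, x)) integrable_on cbox a b" for \<theta>
    using locally_lipschitz_imp_continuous[OF D]
    by (intro integrable_continuous continuous_on_scaleR p, rule continuous_on_compose2[of UNIV D])
      (auto intro: continuous_intros)
  have "(P * L * measure lborel (cbox a b))-lipschitz_on (ball \<theta>0 1) (\<lambda>\<theta>. integral (cbox a b) (\<lambda>x. p x *\<^sub>R D (\<theta>, x)))"
  proof (rule lipschitz_onI)
    fix \<theta>1 \<theta>2 assume \<theta>: "\<theta>1 \<in> ball \<theta>0 1" "\<theta>2 \<in> ball \<theta>0 1"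
    have "norm (p x *\<^sub>R D (\<theta>1, x) - p x *\<^sub>R D (\<theta>2, x)) \<le> P * L * dist \<theta>1 \<theta>2" if "x \<in> cbox a b" for x
    proof -
      have "norm (p x *\<^sub>R D (\<theta>1, x) - p x *\<^sub>R D (\<theta>2, x)) = \<bar>p x\<bar> * dist (D (\<theta>1, x)) (D (\<theta>2, x))"
        by (simp add: dist_norm flip: scaleR_diff_right)
      also have "\<dots> \<le> P * (L * dist \<theta>1 \<theta>2)"
        using P that \<theta> lipschitz_onD[OF L(2)[OF that]] by (intro mult_mono) auto
      finally show ?thesis by (simp add: mult.assoc)
    qed
    then have "norm (integral (cbox a b) (\<lambda>x. p x *\<^sub>R D (\<theta>1, x) - p x *\<^sub>R D (\<theta>2, x)))
        \<le> P * L * dist \<theta>1 \<theta>2 * measure lborel (cbox a b)"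
      using P(1) L(1) integrable
      by (intro has_integral_bound[OF _ integrable_integral]) (auto intro: integrable_diff)
    then show "dist (integral (cbox a b) (\<lambda>x. p x *\<^sub>R D (\<theta>1, x))) (integral (cbox a b) (\<lambda>x. p x *\<^sub>R D (\<theta>2, x)))
        \<le> P * L * measure lborel (cbox a b) * dist \<theta>1 \<theta>2"
      using integrable by (simp add: dist_norm integral_diff mult_ac)
  qed (use P(1) L(1) in simp)
  then show "\<exists>e>0. \<exists>L. L-lipschitz_on (ball \<theta>0 e) (\<lambda>\<theta>. integral (cbox a b) (\<lambda>x. p x *\<^sub>R D (\<theta>, x)))"
    by (intro exI[of _ 1]) auto
qed

text \<open>Composing with \<open>h \<mapsto> (h, 0)\<close> turns the total derivative \<open>DG (\<theta>, x)\<close> into the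
  partial derivative in \<open>\<theta>\<close>.\<close>

lemma has_derivative_weighted_integral:
  fixes G :: "'a::banach \<times> 'b::euclidean_space \<Rightarrow> real" and p :: "'b \<Rightarrow> real"
  assumes G: "\<And>z. (G has_derivative blinfun_apply (DG z)) (at z)" and DG: "continuous_on UNIV DG"
    and p: "continuous_on (cbox a b) p"
  shows "((\<lambda>\<theta>. integral (cbox a b) (\<lambda>x. p x * G (\<theta>, x))) has_derivative
           blinfun_apply (integral (cbox a b) (\<lambda>x. p x *\<^sub>R (DG (\<theta>, x) o\<^sub>L Blinfun (\<lambda>h. (h, 0)))))) (at \<theta>)"
proof -
  define E :: "'a \<Rightarrow>\<^sub>L ('a \<times> 'b)" where "E = Blinfun (\<lambda>h. (h, 0))"
  have E: "blinfun_apply E = (\<lambda>h. (h, 0))"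
    unfolding E_def by (rule bounded_linear_Blinfun_apply) (auto intro: bounded_linear_Pair)
  have "((\<lambda>\<theta>. integral (cbox a b) (\<lambda>x. p x * G (\<theta>, x))) has_derivative
           blinfun_apply (integral (cbox a b) (\<lambda>x. p x *\<^sub>R (DG (\<theta>, x) o\<^sub>L E)))) (at \<theta> within UNIV)"
  proof (rule leibniz_rule)
    fix \<theta>' x
    have "((\<lambda>\<theta>. G (\<theta>, x)) has_derivative (\<lambda>h. DG (\<theta>', x) (h, 0))) (at \<theta>')"
      by (rule has_derivative_compose[OF _ G]) (auto intro!: derivative_eq_intros)
    moreover have "blinfun_apply (p x *\<^sub>R (DG (\<theta>', x) o\<^sub>L E)) = (\<lambda>h. p x * DG (\<theta>', x) (h, 0))"
      by (simp add: fun_eq_iff E blinfun.scaleR_left)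
    ultimately show "((\<lambda>\<theta>. p x * G (\<theta>, x)) has_derivative blinfun_apply (p x *\<^sub>R (DG (\<theta>', x) o\<^sub>L E))) (at \<theta>' within UNIV)"
      by (simp add: has_derivative_mult_right)
  next
    have "continuous_on UNIV G"
      using has_derivative_continuous[OF G] by (simp add: continuous_at_imp_continuous_on)
    then have "continuous_on (cbox a b) (\<lambda>x. G (\<theta>', x))" for \<theta>'
      by (rule continuous_on_compose2) (auto intro: continuous_intros)
    with p show "(\<lambda>x. p x * G (\<theta>', x)) integrable_on cbox a b" for \<theta>'
      by (intro integrable_continuous continuous_on_mult)
    show "continuous_on (UNIV \<times> cbox a b) (\<lambda>(\<theta>, x). p x *\<^sub>R (DG (\<theta>, x) o\<^sub>L E))"
      using DG by (auto intro!: continuous_intros continuous_on_compose2[OF p] simp: split_beta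
          elim: continuous_on_subset)
  qed auto
  then show ?thesis unfolding E_def by simp
qed

lemma C1_loclip_weighted_integral:
  fixes G :: "'a::euclidean_space \<times> 'b::euclidean_space \<Rightarrow> real" and p :: "'b \<Rightarrow> real"
  assumes G: "C1_loclip G" and p: "continuous_on (cbox a b) p"
  shows "C1_loclip (\<lambda>\<theta>. integral (cbox a b) (\<lambda>x. p x * G (\<theta>, x)))"
proof -
  obtain DG where DG: "\<And>z. (G has_derivative blinfun_apply (DG z)) (at z)" "locally_lipschitz DG"
    using G C1_loclipE by blast
  have "locally_lipschitz (\<lambda>z. DG z o\<^sub>L Blinfun (\<lambda>h. (h, 0)))"
    by (intro locally_lipschitz_bilinear[OF bounded_bilinear_blinfun_compose] DG(2) locally_lipschitz_const)
  from locally_lipschitz_weighted_integral[OF this p]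
  show ?thesis
    by (rule C1_loclipI[OF has_derivative_weighted_integral[OF DG(1) locally_lipschitz_imp_continuous[OF DG(2)] p]])
qed

lemma integral_density_eq_integral_cbox:
  fixes p F :: "'a::euclidean_space \<Rightarrow> real"
  assumes p: "continuous_on UNIV p" "\<And>x. p x \<ge> 0" "\<And>x. x \<notin> cbox a b \<Longrightarrow> p x = 0"
    and F: "continuous_on UNIV F"
  shows "integral\<^sup>L (density lborel (\<lambda>x. ennreal (p x))) F = integral (cbox a b) (\<lambda>x. p x * F x)"
proof -
  have "integral\<^sup>L (density lborel (\<lambda>x. ennreal (p x))) F = integral\<^sup>L lborel (\<lambda>x. p x *\<^sub>R F x)"
    using p(1,2) F by (intro integral_density) (auto intro: borel_measurable_continuous_onI)
  also have "\<dots> = (LINT x:cbox a b|lborel. p x * F x)"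
    unfolding set_lebesgue_integral_def using p(3)
    by (intro Bochner_Integration.integral_cong) (auto simp: indicator_def)
  also have "\<dots> = integral (cbox a b) (\<lambda>x. p x * F x)"
  proof (rule set_borel_integral_eq_integral)
    show "set_integrable lborel (cbox a b) (\<lambda>x. p x * F x)"
      using p(1) F unfolding set_integrable_def
      by (intro borel_integrable_compact compact_cbox continuous_on_mult) (auto elim: continuous_on_subset)
  qed
  finally show ?thesis .
qed

lemma C1_loclip_integral_density_compact_support:
  fixes G :: "'a::euclidean_space \<times> 'b::euclidean_space \<Rightarrow> real" and p :: "'b \<Rightarrow> real"
  assumes G: "C1_loclip G" and p: "continuous_on UNIV p" "\<And>x. p x \<ge> 0"
    and supp: "compact (closure {x. p x \<noteq> 0})"
  shows "C1_loclip (\<lambda>\<theta>. integral\<^sup>L (density lborel (\<lambda>x. ennreal (p x))) (\<lambda>x. G (\<theta>, x)))"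
proof -
  obtain a where a: "closure {x. p x \<noteq> 0} \<subseteq> cbox (-a) a"
    using bounded_subset_cbox_symmetric[OF compact_imp_bounded[OF supp]] by blast
  have "p x = 0" if "x \<notin> cbox (-a) a" for x
    using closure_subset[of "{x. p x \<noteq> 0}"] a that by blast
  then have "integral\<^sup>L (density lborel (\<lambda>x. ennreal (p x))) (\<lambda>x. G (\<theta>, x))
      = integral (cbox (-a) a) (\<lambda>x. p x * G (\<theta>, x))" for \<theta>
    using C1_loclip_imp_continuous[OF C1_loclip_fix_fst[OF G]] p
    by (intro integral_density_eq_integral_cbox) simp_all
  moreover have "C1_loclip (\<lambda>\<theta>. integral (cbox (-a) a) (\<lambda>x. p x * G (\<theta>, x)))"
    by (rule C1_loclip_weighted_integral[OF G continuous_on_subset[OF p(1)]]) simp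
  ultimately show ?thesis by simp
qed

theorem corollaryA2:
  fixes ds :: "nat list" and \<psi> :: "real \<Rightarrow> real"
    and l :: "real ^ 'o \<Rightarrow> real ^ 'o \<Rightarrow> real"
    and f :: "real ^ 'i \<Rightarrow> real ^ 'o"
    and \<mu> :: "(real ^ 'i) measure"
  assumes arch: "ds \<noteq> []" "\<forall>d\<in>set ds. d > 0"
    and dims: "CARD('i) = hd ds" "CARD('o) = last ds" "CARD('p) = nn_dim ds"
    and act: "C1_loclip \<psi>"
    and loss: "loss_fun l" "C1_loclip (\<lambda>(y, z). l y z)"
    and target: "C1_loclip f"
    and prob: "prob_space \<mu>"
    and meas: "(sets \<mu> = sets borel \<and>
        (\<exists>n::nat. n > 0 \<and> (\<exists>xs :: nat \<Rightarrow> real ^ 'i. \<forall>A\<in>sets borel.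
            emeasure \<mu> A = ennreal ((\<Sum>i<n. indicator A (xs i)) / real n))))
      \<or> (\<exists>p :: real ^ 'i \<Rightarrow> real. C1_map p \<and> definable_fun p \<and> (\<forall>x. p x \<ge> 0) \<and>
            compact (closure {x. p x \<noteq> 0}) \<and> \<mu> = density lborel (\<lambda>x. ennreal (p x)))"
  shows "C1_loclip (\<lambda>\<theta> :: real ^ 'p. integral\<^sup>L \<mu> (\<lambda>x. l (nn_fun ds \<psi> \<theta> x) (f x)))"
proof -
  define G where "G = (\<lambda>z :: (real ^ 'p) \<times> (real ^ 'i). l (nn_fun ds \<psi> (fst z) (snd z)) (f (snd z)))"
  have "C1_loclip G"
    using C1_loclip_compose[OF loss(2) C1_loclip_Pair[OF C1_loclip_nn_fun[OF act]
            C1_loclip_compose[OF target C1_loclip_linear[OF bounded_linear_snd]]]]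
    by (simp add: G_def)
  have "C1_loclip (\<lambda>\<theta>. integral\<^sup>L \<mu> (\<lambda>x. G (\<theta>, x)))"
    using meas
  proof (elim disjE exE conjE)
    fix n and xs :: "nat \<Rightarrow> real ^ 'i"
    assume "sets \<mu> = sets borel" "\<forall>A\<in>sets borel. emeasure \<mu> A = ennreal ((\<Sum>i<n. indicator A (xs i)) / real n)"
    then have "AE x in \<mu>. x \<in> xs ` {..<n}"
      by (rule empirical_measure_AE_sample)
    from C1_loclip_integral_finite_support[OF \<open>C1_loclip G\<close> \<open>sets \<mu> = sets borel\<close>
        prob_space.finite_measure[OF prob] _ this]
    show ?thesis by simp
  next
    fix p :: "real ^ 'i \<Rightarrow> real"
    assume p: "C1_map p" "\<forall>x. p x \<ge> 0" "compact (closure {x. p x \<noteq> 0})"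
      and \<mu>: "\<mu> = density lborel (\<lambda>x. ennreal (p x))"
    show ?thesis
      unfolding \<mu> using p(2)
      by (intro C1_loclip_integral_density_compact_support[OF \<open>C1_loclip G\<close> C1_map_imp_continuous[OF p(1)]
          _ p(3)]) simp_all
  qed
  then show ?thesis by (simp add: G_def)
qed

end
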